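(* Consider the coded cooperative data exchange (CCDE) setting described in the context, with user set $V$, minimum sum-rate $R_{\mathrm{CO}}$, fundamental partition $\mathcal{P}^*$ (which has $|\mathcal{P}^*|\ge 2$), core $\mathscr{R}^*_{\mathrm{CO}}(V)$, and $K=|\mathcal{P}^*|-1$. Let $w_V\in\mathbb{R}_{>0}^{|V|}$ and $g(r_V)=\sum_{i\in V} r_i^2/w_i$. Let $\mathbb{Q}_K=\{z/K: z\in\mathbb{Z}\}$. Then a vector $r^*_V\in\mathscr{R}^*_{\mathrm{CO}}(V)\cap\mathbb{Q}_K^{|V|}$ is a minimizer of $$\min\{g(r_V): r_V\in\mathscr{R}^*_{\mathrm{CO}}(V)\cap\mathbb{Q}_K^{|V|}\}$$ if and only if, for all $i,j\in V$ and all positive integers $\zeta$ such that $r^*_V+\frac{\zeta}{K}(\chi_i-\chi_j)\in\mathscr{R}^*_{\mathrm{CO}}(V)$, we have $g(r^*_V)\le g\big(r^*_V+\frac{\zeta}{K}(\chi_i-\chi_j)\big)$.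
   Context: CCDE setting: there is a finite collection of independent packets, each uniformly distributed over a finite field; each user $i\in V$ ($|V|>1$) observes $Z_i$, a subset of the packets, and entropy is measured in packets, so that for $X\subseteq V$, $H(X)$ (the entropy of $Z_X=(Z_i:i\in X)$) is the number of distinct packets observed by users in $X$; in particular $H$ is integer-valued. Write $r(X)=\sum_{i\in X}r_i$ for $r_V\in\mathbb{R}^{|V|}$, and $H(X\mid Y)=H(X\cup Y)-H(Y)$. The achievable region is $\mathscr{R}(V)=\{r_V: r(X)\ge H(X\mid V\setminus X)\ \forall X\subsetneq V\}$, $R_{\mathrm{CO}}=\min\{r(V): r_V\in\mathscr{R}(V)\}$, and the core is $\mathscr{R}^*_{\mathrm{CO}}(V)=\{r_V\in\mathscr{R}(V): r(V)=R_{\mathrm{CO}}\}$. For $\alpha\in\mathbb{R}$, $f_\alpha(\emptyset)=0$ and $f_\alpha(X)=\alpha-H(V\setminus X\mid X)$ for $X\ne\emptyset$; the fundamental partition $\mathcal{P}^*$ is the finest partition of $V$ minimizing $\sum_{C\in\mathcal{P}}f_{R_{\mathrm{CO}}}(C)$ over all partitions $\mathcal{P}$ of $V$. $\chi_i\in\{0,1\}^{|V|}$ denotes the characteristic vector of $\{i\}$. *)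

theory Defs
  imports Complex_Main "HOL-Library.Disjoint_Sets"
begin

(* Users: a finite set V of type 'u; packets of type 'p; Z i = packets observed by user i. *)

definition ent :: "('u \<Rightarrow> 'p set) \<Rightarrow> 'u set \<Rightarrow> real" where
  "ent Z X = real (card (\<Union> (Z ` X)))"

definition cent :: "('u \<Rightarrow> 'p set) \<Rightarrow> 'u set \<Rightarrow> 'u set \<Rightarrow> real" where
  "cent Z X Y = ent Z (X \<union> Y) - ent Z Y"

(* achievable region; vectors r_V are functions vanishing outside V *)
definition region :: "'u set \<Rightarrow> ('u \<Rightarrow> 'p set) \<Rightarrow> ('u \<Rightarrow> real) set" where
  "region V Z = {r. (\<forall>i. i \<notin> V \<longrightarrow> r i = 0) \<and>
                     (\<forall>X. X \<subset> V \<longrightarrow> sum r X \<ge> cent Z X (V - X))}"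

definition R_CO :: "'u set \<Rightarrow> ('u \<Rightarrow> 'p set) \<Rightarrow> real" where
  "R_CO V Z = Inf {sum r V | r. r \<in> region V Z}"

definition core :: "'u set \<Rightarrow> ('u \<Rightarrow> 'p set) \<Rightarrow> ('u \<Rightarrow> real) set" where
  "core V Z = {r \<in> region V Z. sum r V = R_CO V Z}"

definition f_alpha :: "'u set \<Rightarrow> ('u \<Rightarrow> 'p set) \<Rightarrow> real \<Rightarrow> 'u set \<Rightarrow> real" where
  "f_alpha V Z \<alpha> X = (if X = {} then 0 else \<alpha> - cent Z (V - X) X)"

definition refines :: "'u set set \<Rightarrow> 'u set set \<Rightarrow> bool" where
  "refines P Q \<longleftrightarrow> (\<forall>C\<in>P. \<exists>D\<in>Q. C \<subseteq> D)"

definition minimizing_partition :: "'u set \<Rightarrow> ('u \<Rightarrow> 'p set) \<Rightarrow> 'u set set \<Rightarrow> bool" where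
  "minimizing_partition V Z P \<longleftrightarrow> partition_on V P \<and>
     (\<forall>Q. partition_on V Q \<longrightarrow>
        (\<Sum>C\<in>P. f_alpha V Z (R_CO V Z) C) \<le> (\<Sum>C\<in>Q. f_alpha V Z (R_CO V Z) C))"

definition fund_partition :: "'u set \<Rightarrow> ('u \<Rightarrow> 'p set) \<Rightarrow> 'u set set" where
  "fund_partition V Z = (THE P. minimizing_partition V Z P \<and>
      (\<forall>Q. minimizing_partition V Z Q \<longrightarrow> refines P Q))"

definition chi :: "'u \<Rightarrow> 'u \<Rightarrow> real" where
  "chi i = (\<lambda>k. if k = i then 1 else 0)"

definition QK_vecs :: "'u set \<Rightarrow> nat \<Rightarrow> ('u \<Rightarrow> real) set" where
  "QK_vecs V K = {r. \<forall>i\<in>V. \<exists>z::int. r i = real_of_int z / real K}"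

definition gfun :: "'u set \<Rightarrow> ('u \<Rightarrow> real) \<Rightarrow> ('u \<Rightarrow> real) \<Rightarrow> real" where
  "gfun V w r = (\<Sum>i\<in>V. (r i)\<^sup>2 / w i)"

end

theory Submission
  imports Defs
begin

text \<open>
  The core is \<open>{r. r(V) = R\<^sub>C\<^sub>O \<and> r(A) \<le> cap(A) for nonempty A \<subseteq> V}\<close> with the submodular
  \<open>cap(A) = R\<^sub>C\<^sub>O - H(V) + H(A)\<close>, and \<open>g\<close> is separable convex, so, as for M-convex functions,
  local optimality under the exchanges \<open>\<chi>\<^sub>i - \<chi>\<^sub>j\<close> implies global optimality.
  Let \<open>r\<^sup>*\<close> be locally optimal, \<open>r\<close> another point of the core on the lattice \<open>(1/K)\<int>\<close>, and
  \<open>d = r - r\<^sup>*\<close>. Every nonzero \<open>d\<^sub>k\<close> has modulus at least \<open>1/K\<close>, so convexity gives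
  \<open>g(r) - g(r\<^sup>*) \<ge> \<Sum>\<^sub>k d\<^sub>k c\<^sub>k\<close>, where \<open>c\<^sub>k\<close> is the slope of \<open>g\<close> for the step of length \<open>1/K\<close>
  from \<open>r\<^sup>*\<close> towards \<open>r\<close> in coordinate \<open>k\<close>. As \<open>d(V) = 0\<close>, Abel summation reduces this to
  \<open>d(U) \<ge> 0\<close> for the upper level sets \<open>U\<close> of \<open>c\<close>. If \<open>i \<in> U\<close>, \<open>d\<^sub>i < 0\<close> and \<open>j \<notin> U\<close>, \<open>d\<^sub>j > 0\<close>,
  moving \<open>1/K\<close> from \<open>i\<close> to \<open>j\<close> would decrease \<open>g\<close>, so it leaves the core: some \<open>r\<^sup>*\<close>-tight
  set contains \<open>j\<close> but not \<open>i\<close>. Tight sets are closed under meets and joins, and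
  \<open>r(A) \<le> r\<^sup>*(A)\<close> on every union \<open>A\<close> of tight sets; taking for \<open>A\<close> the union of the minimal
  tight sets around such \<open>j\<close> gives \<open>d(U) \<ge> d(V - A) \<ge> 0\<close>. The argument works for every
  \<open>K\<close>.
\<close>

lemma scaled_Ints_gap:
  fixes x :: real
  assumes "real K * x \<in> \<int>" and "0 < x"
  shows "1 / real K \<le> x"
proof (cases "K = 0")
  case False
  from assms(1) obtain z where z: "real K * x = of_int z" by (auto elim: Ints_cases)
  have "0 < real K * x" using False assms(2) by simp
  then have "1 \<le> real K * x" unfolding z by simp
  then show ?thesis using False by (simp add: field_simps)
qed (use assms(2) in simp)

lemma square_diff_div_ge:
  fixes x d e w :: real
  assumes "0 \<le> d * (d - e)" and "0 < w"
  shows "d * ((2 * x + e) / w) \<le> ((x + d)\<^sup>2 - x\<^sup>2) / w"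
proof -
  have "(x + d)\<^sup>2 - x\<^sup>2 = d * (2 * x + e) + d * (d - e)"
    by (simp add: power2_eq_square algebra_simps)
  then show ?thesis
    using divide_right_mono[of "d * (2 * x + e)" "(x + d)\<^sup>2 - x\<^sup>2" w] assms by simp
qed

lemma sum_mult_nonneg_if_upper_level_sums_nonneg:
  fixes d c :: "'a \<Rightarrow> real"
  assumes "finite S" and "sum d S = 0" and "\<And>\<theta>. 0 \<le> sum d {k\<in>S. \<theta> < c k}"
  shows "0 \<le> (\<Sum>k\<in>S. d k * c k)"
  using assms(3)
proof (induction "card (c ` S)" arbitrary: c rule: less_induct)
  case less
  have fin: "finite (c ` S)" using assms(1) by simp
  define M where "M = Max (c ` S)"
  have M_ge: "c k \<le> M" if "k \<in> S" for k using fin that by (simp add: M_def)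
  show ?case
  proof (cases "c ` S - {M} = {}")
    case True
    then have "(\<Sum>k\<in>S. d k * c k) = (\<Sum>k\<in>S. d k * M)" by (intro sum.cong) auto
    also have "\<dots> = sum d S * M" by (simp add: sum_distrib_right)
    finally show ?thesis using assms(2) by simp
  next
    case False
    define m where "m = Max (c ` S - {M})"
    have m_in: "m \<in> c ` S - {M}" unfolding m_def using False fin by (intro Max_in) auto
    have m_lt: "m < M" using m_in M_ge by force
    have top: "c k = M" if "k \<in> S" "m < c k" for k
    proof (rule ccontr)
      assume "c k \<noteq> M"
      then have "c k \<le> m" unfolding m_def using fin that(1) by (intro Max_ge) auto
      then show False using that(2) by simp
    qed
    define c' where "c' k = min (c k) m" for k
    have "c' ` S \<subseteq> c ` S - {M}" using m_in m_lt by (auto simp: c'_def min_def)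
    moreover have "M \<in> c ` S" unfolding M_def using m_in fin by (intro Max_in) auto
    ultimately have "card (c' ` S) < card (c ` S)"
      using fin by (meson card_Diff1_less card_mono finite_Diff le_less_trans)
    moreover have "0 \<le> sum d {k\<in>S. \<theta> < c' k}" for \<theta>
      using less.prems[of \<theta>] by (cases "\<theta> < m") (auto simp: c'_def)
    ultimately have IH: "0 \<le> (\<Sum>k\<in>S. d k * c' k)" using less.hyps by blast
    have "d k * c k = d k * c' k + (if m < c k then d k else 0) * (M - m)" if "k \<in> S" for k
      using top[OF that] by (cases "m < c k") (simp_all add: c'_def right_diff_distrib)
    then have "(\<Sum>k\<in>S. d k * c k) = (\<Sum>k\<in>S. d k * c' k) + sum d {k\<in>S. m < c k} * (M - m)"
      using assms(1) by (simp add: sum.distrib sum.inter_filter flip: sum_distrib_right)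
    moreover have "0 \<le> sum d {k\<in>S. m < c k} * (M - m)" using less.prems m_lt by simp
    ultimately show ?thesis using IH by linarith
  qed
qed

lemma QK_vecs_scaled_Ints: "r \<in> QK_vecs V K \<Longrightarrow> k \<in> V \<Longrightarrow> real K * r k \<in> \<int>"
  by (cases "K = 0") (auto simp: QK_vecs_def)

lemma sum_chi: "finite A \<Longrightarrow> sum (chi a) A = (if a \<in> A then 1 else 0)"
  by (simp add: chi_def)

lemma QK_vecs_exchange:
  assumes "r \<in> QK_vecs V K"
  shows "(\<lambda>k. r k + real \<zeta> / real K * (chi i k - chi j k)) \<in> QK_vecs V K"
  unfolding QK_vecs_def
proof (intro CollectI ballI)
  fix k assume "k \<in> V"
  then obtain z where z: "r k = real_of_int z / real K" using assms by (auto simp: QK_vecs_def)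
  define e :: int where "e = (if k = i then 1 else 0) - (if k = j then 1 else 0)"
  have "r k + real \<zeta> / real K * (chi i k - chi j k) = real_of_int (z + int \<zeta> * e) / real K"
    unfolding z by (simp add: chi_def e_def add_divide_distrib)
  then show "\<exists>z::int. r k + real \<zeta> / real K * (chi i k - chi j k) = real_of_int z / real K" ..
qed

lemma gfun_exchange:
  assumes "finite V" "a \<in> V" "b \<in> V" "a \<noteq> b"
  shows "gfun V w (\<lambda>k. r k + \<delta> * (chi a k - chi b k)) =
         gfun V w r + \<delta> * (2 * r a + \<delta>) / w a - \<delta> * (2 * r b - \<delta>) / w b"
proof -
  have "(r k + \<delta> * (chi a k - chi b k))\<^sup>2 / w k = (r k)\<^sup>2 / w k
      + (if k = a then \<delta> * (2 * r a + \<delta>) / w a else 0)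
      - (if k = b then \<delta> * (2 * r b - \<delta>) / w b else 0)" for k
  proof -
    have "(r k + \<delta> * (chi a k - chi b k))\<^sup>2 = (r k)\<^sup>2
      + (if k = a then \<delta> * (2 * r a + \<delta>) else 0) - (if k = b then \<delta> * (2 * r b - \<delta>) else 0)"
      using assms(4) by (auto simp: chi_def power2_eq_square algebra_simps)
    then show ?thesis by (simp add: add_divide_distrib diff_divide_distrib)
  qed
  then show ?thesis
    using assms by (simp add: gfun_def sum.distrib sum_subtractf)
qed

locale packet_sharing =
  fixes V :: "'u set" and Z :: "'u \<Rightarrow> 'p set"
  assumes finite_users: "finite V" and finite_packets: "\<forall>i\<in>V. finite (Z i)"
begin

text \<open>The region constraint on \<open>V - A\<close>, rewritten with \<open>r(V) = R\<^sub>C\<^sub>O\<close> as a bound on \<open>r(A)\<close>.\<close>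

definition cap :: "'u set \<Rightarrow> real" where
  "cap A = R_CO V Z - ent Z V + ent Z A"

definition tight :: "('u \<Rightarrow> real) \<Rightarrow> 'u set \<Rightarrow> bool" where
  "tight q A \<longleftrightarrow> A \<subseteq> V \<and> A \<noteq> {} \<and> sum q A = cap A"

lemma sum_le_cap:
  assumes "q \<in> core V Z" "A \<subseteq> V" "A \<noteq> {}"
  shows "sum q A \<le> cap A"
proof -
  have "V - A \<subset> V" using assms(2,3) by blast
  then have "cent Z (V - A) (V - (V - A)) \<le> sum q (V - A)"
    using assms(1) by (simp add: core_def region_def)
  moreover have "V - (V - A) = A" "(V - A) \<union> A = V" using assms(2) by blast+
  moreover have "sum q V = sum q (V - A) + sum q A"
    using sum.subset_diff[OF assms(2) finite_users] by simp
  ultimately show ?thesis using assms(1) by (simp add: core_def cent_def cap_def)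
qed

lemma in_coreI:
  assumes "\<forall>k. k \<notin> V \<longrightarrow> q k = 0" "sum q V = R_CO V Z"
    and "\<And>A. A \<subseteq> V \<Longrightarrow> A \<noteq> {} \<Longrightarrow> sum q A \<le> cap A"
  shows "q \<in> core V Z"
proof -
  have "cent Z X (V - X) \<le> sum q X" if "X \<subset> V" for X
  proof -
    have "sum q (V - X) \<le> cap (V - X)" using that by (intro assms(3)) auto
    moreover have "sum q V = sum q (V - X) + sum q X"
      using sum.subset_diff[of X V q] that finite_users by auto
    moreover have "X \<union> (V - X) = V" using that by auto
    ultimately show ?thesis using assms(2) by (simp add: cent_def cap_def)
  qed
  then show ?thesis using assms(1,2) by (simp add: core_def region_def)
qed

lemma ent_submodular:
  assumes "A \<subseteq> V" "B \<subseteq> V"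
  shows "ent Z (A \<union> B) + ent Z (A \<inter> B) \<le> ent Z A + ent Z B"
proof -
  have "finite A" "finite B" using assms finite_users by (auto intro: finite_subset)
  then have fin: "finite (\<Union>(Z ` A))" "finite (\<Union>(Z ` B))" using assms finite_packets by auto
  have "card (\<Union>(Z ` (A \<inter> B))) \<le> card (\<Union>(Z ` A) \<inter> \<Union>(Z ` B))"
    using fin by (intro card_mono) auto
  moreover have "card (\<Union>(Z ` A) \<union> \<Union>(Z ` B)) + card (\<Union>(Z ` A) \<inter> \<Union>(Z ` B))
      = card (\<Union>(Z ` A)) + card (\<Union>(Z ` B))"
    using card_Un_Int[OF fin] by simp
  ultimately show ?thesis by (simp add: ent_def image_Un)
qed

lemma tight_Int_Un:
  assumes "q \<in> core V Z" "tight q A" "tight q B" "A \<inter> B \<noteq> {}"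
  shows "tight q (A \<inter> B)" and "tight q (A \<union> B)"
proof -
  have AB: "A \<subseteq> V" "B \<subseteq> V" "sum q A = cap A" "sum q B = cap B"
    using assms(2,3) by (auto simp: tight_def)
  then have "finite A" "finite B" using finite_users by (auto intro: finite_subset)
  then have "sum q (A \<union> B) + sum q (A \<inter> B) = sum q A + sum q B" by (rule sum.union_inter)
  moreover have "cap (A \<union> B) + cap (A \<inter> B) \<le> cap A + cap B"
    using ent_submodular[OF AB(1,2)] by (simp add: cap_def)
  moreover have "sum q (A \<union> B) \<le> cap (A \<union> B)" "sum q (A \<inter> B) \<le> cap (A \<inter> B)"
    using AB assms(1,4) by (auto intro!: sum_le_cap)
  ultimately have "sum q (A \<inter> B) = cap (A \<inter> B)" "sum q (A \<union> B) = cap (A \<union> B)"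
    using AB(3,4) by linarith+
  then show "tight q (A \<inter> B)" "tight q (A \<union> B)"
    using AB(1,2) assms(4) by (auto simp: tight_def)
qed

lemma sum_Union_tight_le:
  assumes rs: "rs \<in> core V Z" and r: "r \<in> core V Z"
  shows "finite F \<Longrightarrow> \<forall>A\<in>F. tight rs A \<Longrightarrow> sum r (\<Union>F) \<le> sum rs (\<Union>F)"
proof (induction "card F" arbitrary: F rule: less_induct)
  case less
  show ?case
  proof (cases "F = {}")
    case False
    then obtain A where A: "A \<in> F" by blast
    show ?thesis
    proof (cases "\<exists>B\<in>F - {A}. A \<inter> B \<noteq> {}")
      case True
      then obtain B where B: "B \<in> F" "B \<noteq> A" "A \<inter> B \<noteq> {}" by blast
      define F' where "F' = insert (A \<union> B) (F - {A, B})"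
      have "card F' \<le> Suc (card (F - {A, B}))"
        using less.prems(1) by (simp add: F'_def card_insert_if)
      moreover have "card (F - {A, B}) = card F - 2"
        using A B less.prems(1) by (simp add: card_Diff_subset)
      moreover have "card {A, B} \<le> card F" using A B less.prems(1) by (intro card_mono) auto
      ultimately have "card F' < card F" using B(2) by simp
      moreover have "\<forall>X\<in>F'. tight rs X"
        using tight_Int_Un(2)[OF rs] A B less.prems(2) by (auto simp: F'_def)
      moreover have "\<Union>F' = \<Union>F" using A B by (auto simp: F'_def)
      ultimately show ?thesis using less.hyps less.prems(1) by (metis F'_def finite_Diff finite_insert)
    next
      case False
      then have split: "\<Union>F = A \<union> \<Union>(F - {A})" "A \<inter> \<Union>(F - {A}) = {}" using A by auto
      have "finite A" "finite (\<Union>(F - {A}))"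
        using A less.prems finite_users by (auto simp: tight_def intro: finite_subset)
      then have "sum r (\<Union>F) - sum rs (\<Union>F)
          = (sum r A - sum rs A) + (sum r (\<Union>(F - {A})) - sum rs (\<Union>(F - {A})))"
        unfolding split(1) using split(2) by (simp add: sum.union_disjoint)
      moreover have "sum r A \<le> sum rs A"
        using A less.prems(2) sum_le_cap[OF r] by (auto simp: tight_def)
      moreover have "sum r (\<Union>(F - {A})) \<le> sum rs (\<Union>(F - {A}))"
        using less.hyps[of "F - {A}"] less.prems card_Diff1_less[OF less.prems(1) A] by simp
      ultimately show ?thesis by linarith
    qed
  qed simp
qed

lemma tight_disjoint_from:
  assumes rs: "rs \<in> core V Z" and "j \<in> V"
    and sep: "\<And>i. i \<in> I \<Longrightarrow> \<exists>A. tight rs A \<and> j \<in> A \<and> i \<notin> A"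
  shows "\<exists>A. tight rs A \<and> j \<in> A \<and> A \<inter> I = {}"
proof -
  have "tight rs V" using rs \<open>j \<in> V\<close> by (auto simp: tight_def core_def cap_def)
  then obtain A where A: "tight rs A" "j \<in> A"
    and least: "\<And>B. tight rs B \<Longrightarrow> j \<in> B \<Longrightarrow> card A \<le> card B"
    using ex_has_least_nat[of "\<lambda>A. tight rs A \<and> j \<in> A" V card] \<open>j \<in> V\<close> by blast
  have "i \<notin> A" if i: "i \<in> I" for i
  proof -
    obtain B where B: "tight rs B" "j \<in> B" "i \<notin> B" using sep[OF i] by blast
    have "tight rs (A \<inter> B)" using tight_Int_Un(1)[OF rs A(1) B(1)] A(2) B(2) by blast
    then have "card A \<le> card (A \<inter> B)" using least A(2) B(2) by blast
    moreover have "finite A" using A(1) finite_users by (auto simp: tight_def intro: finite_subset)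
    ultimately have "A \<inter> B = A" by (intro card_seteq) auto
    then show ?thesis using B(3) by blast
  qed
  then show ?thesis using A by blast
qed

lemma sum_le_if_tight_separated:
  assumes rs: "rs \<in> core V Z" and r: "r \<in> core V Z" and "U \<subseteq> V"
    and sep: "\<And>i j. i \<in> U \<Longrightarrow> j \<in> V - U \<Longrightarrow> r i < rs i \<Longrightarrow> rs j < r j \<Longrightarrow>
                 \<exists>A. tight rs A \<and> j \<in> A \<and> i \<notin> A"
  shows "sum rs U \<le> sum r U"
proof -
  define I where "I = {i \<in> U. r i < rs i}"
  define J where "J = {j \<in> V - U. rs j < r j}"
  have "\<exists>A. tight rs A \<and> j \<in> A \<and> A \<inter> I = {}" if "j \<in> J" for j
    using that by (intro tight_disjoint_from[OF rs]) (auto simp: I_def J_def intro: sep)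
  then obtain f where f: "\<And>j. j \<in> J \<Longrightarrow> tight rs (f j) \<and> j \<in> f j \<and> f j \<inter> I = {}"
    by metis
  define A where "A = \<Union>(f ` J)"
  have "finite J" using finite_users by (simp add: J_def)
  then have "sum r A \<le> sum rs A" unfolding A_def using f by (intro sum_Union_tight_le[OF rs r]) auto
  moreover have "A \<subseteq> V" using f by (auto simp: A_def tight_def)
  moreover have "sum r V = sum rs V" using r rs by (simp add: core_def)
  ultimately have "sum rs (V - A) \<le> sum r (V - A)"
    using finite_users by (simp add: sum_diff)
  moreover have "(\<Sum>k\<in>V - A. r k - rs k) \<le> (\<Sum>k\<in>U. r k - rs k)"
  proof -
    have "V - A = {k \<in> V. k \<notin> A}" by blast
    then have "(\<Sum>k\<in>V - A. r k - rs k) = (\<Sum>k\<in>V. if k \<notin> A then r k - rs k else 0)"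
      using finite_users by (simp add: sum.inter_filter)
    also have "\<dots> \<le> (\<Sum>k\<in>V. if k \<in> U then r k - rs k else 0)"
    proof (rule sum_mono)
      fix k assume "k \<in> V"
      have "k \<in> J \<Longrightarrow> k \<in> A" "k \<in> I \<Longrightarrow> k \<notin> A" using f by (auto simp: A_def)
      then show "(if k \<notin> A then r k - rs k else 0) \<le> (if k \<in> U then r k - rs k else 0)"
        using \<open>k \<in> V\<close> by (auto simp: I_def J_def intro!: leI)
    qed
    also have "\<dots> = (\<Sum>k\<in>{k \<in> V. k \<in> U}. r k - rs k)"
      using finite_users by (simp add: sum.inter_filter)
    also have "{k \<in> V. k \<in> U} = U" using \<open>U \<subseteq> V\<close> by blast
    finally show ?thesis .
  qed
  ultimately show ?thesis by (simp add: sum_subtractf)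
qed

lemma exchange_in_core:
  assumes rs: "rs \<in> core V Z" "rs \<in> QK_vecs V K" and ab: "a \<in> V" "b \<in> V"
    and no_sep: "\<nexists>A. tight rs A \<and> a \<in> A \<and> b \<notin> A"
  shows "(\<lambda>k. rs k + 1 / real K * (chi a k - chi b k)) \<in> core V Z"
proof (rule in_coreI)
  let ?q = "\<lambda>k. rs k + 1 / real K * (chi a k - chi b k)"
  have sum_q: "sum ?q A = sum rs A + 1 / real K * ((if a \<in> A then 1 else 0) - (if b \<in> A then 1 else 0))"
    if "A \<subseteq> V" for A
  proof -
    have "sum ?q A = sum rs A + 1 / real K * (sum (chi a) A - sum (chi b) A)"
      by (simp only: sum.distrib sum_subtractf sum_distrib_left[symmetric])
    then show ?thesis using finite_subset[OF that finite_users] by (simp add: sum_chi)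
  qed
  have R: "sum rs V = R_CO V Z" using rs(1) by (simp add: core_def)
  show "\<forall>k. k \<notin> V \<longrightarrow> ?q k = 0" using rs(1) ab by (auto simp: chi_def core_def region_def)
  show "sum ?q V = R_CO V Z" using sum_q[of V] ab R by simp
  fix A assume A: "A \<subseteq> V" "A \<noteq> {}"
  have le: "sum rs A \<le> cap A" using sum_le_cap[OF rs(1) A] .
  show "sum ?q A \<le> cap A"
  proof (cases "a \<in> A \<and> b \<notin> A")
    case True
    then have "0 < cap A - sum rs A" using le no_sep A by (auto simp: tight_def)
    moreover have "cap A - sum rs A = sum rs (V - A) + ent Z A - ent Z V"
      using sum.subset_diff[OF A(1) finite_users, of rs] R by (simp add: cap_def)
    then have "real K * (cap A - sum rs A)
        = real K * sum rs (V - A) + real K * ent Z A - real K * ent Z V"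
      by (simp add: right_diff_distrib distrib_left)
    moreover have "real K * sum rs (V - A) \<in> \<int>"
      using QK_vecs_scaled_Ints[OF rs(2)] by (auto simp: sum_distrib_left)
    ultimately have "1 / real K \<le> cap A - sum rs A"
      by (intro scaled_Ints_gap) (simp_all add: ent_def)
    then show ?thesis using sum_q[OF A(1)] True by simp
  next
    case False
    then have "(if a \<in> A then 1 else 0) - (if b \<in> A then 1 else 0) \<le> (0::real)" by auto
    then have "1 / real K * ((if a \<in> A then 1 else 0) - (if b \<in> A then 1 else 0)) \<le> 0"
      by (rule mult_nonneg_nonpos[rotated]) simp
    then show ?thesis using sum_q[OF A(1)] le by linarith
  qed
qed

lemma tight_separates_if_no_improving_exchange:
  assumes rs: "rs \<in> core V Z" "rs \<in> QK_vecs V K" and "0 < K"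
    and ij: "i \<in> V" "j \<in> V" "i \<noteq> j"
    and no_improvement: "(\<lambda>k. rs k + 1 / real K * (chi j k - chi i k)) \<in> core V Z \<Longrightarrow>
          gfun V w rs \<le> gfun V w (\<lambda>k. rs k + 1 / real K * (chi j k - chi i k))"
    and slopes: "(2 * rs j + 1 / real K) / w j < (2 * rs i - 1 / real K) / w i"
  shows "\<exists>A. tight rs A \<and> j \<in> A \<and> i \<notin> A"
proof (rule ccontr)
  define \<delta> where "\<delta> = 1 / real K"
  assume "\<nexists>A. tight rs A \<and> j \<in> A \<and> i \<notin> A"
  then have "gfun V w rs \<le> gfun V w (\<lambda>k. rs k + \<delta> * (chi j k - chi i k))"
    unfolding \<delta>_def using exchange_in_core[OF rs ij(2,1)] no_improvement by blast
  also have "\<dots> = gfun V w rs + \<delta> * ((2 * rs j + \<delta>) / w j) - \<delta> * ((2 * rs i - \<delta>) / w i)"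
    using gfun_exchange[OF finite_users ij(2,1)] ij(3) by simp
  also have "\<dots> < gfun V w rs"
    using mult_strict_left_mono[OF slopes[folded \<delta>_def], of \<delta>] \<open>0 < K\<close> by (simp add: \<delta>_def)
  finally show False by simp
qed

lemma locally_optimal_imp_optimal:
  assumes rs: "rs \<in> core V Z \<inter> QK_vecs V K" and r: "r \<in> core V Z \<inter> QK_vecs V K"
    and "0 < K" and w_pos: "\<forall>i\<in>V. 0 < w i"
    and locally_optimal: "\<And>a b. a \<in> V \<Longrightarrow> b \<in> V \<Longrightarrow>
          (\<lambda>k. rs k + 1 / real K * (chi a k - chi b k)) \<in> core V Z \<Longrightarrow>
          gfun V w rs \<le> gfun V w (\<lambda>k. rs k + 1 / real K * (chi a k - chi b k))"
  shows "gfun V w rs \<le> gfun V w r"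
proof -
  define \<delta> where "\<delta> = 1 / real K"
  define e where "e k = (if rs k < r k then \<delta> else - \<delta>)" for k
  define c where "c k = (2 * rs k + e k) / w k" for k
  have "0 \<le> (r k - rs k) * (r k - rs k - e k)" if "k \<in> V" for k
  proof -
    have "real K * r k \<in> \<int>" "real K * rs k \<in> \<int>"
      using rs r that by (auto intro: QK_vecs_scaled_Ints)
    then have "real K * (r k - rs k) \<in> \<int>" "real K * (rs k - r k) \<in> \<int>"
      by (simp_all add: right_diff_distrib)
    then have "rs k < r k \<Longrightarrow> \<delta> \<le> r k - rs k" "r k < rs k \<Longrightarrow> \<delta> \<le> rs k - r k"
      unfolding \<delta>_def by (auto intro: scaled_Ints_gap)
    then show ?thesis
      by (cases rule: linorder_cases[of "rs k" "r k"]) (auto simp: e_def mult_nonpos_nonpos)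
  qed
  then have pointwise: "(r k - rs k) * c k \<le> (r k)\<^sup>2 / w k - (rs k)\<^sup>2 / w k" if "k \<in> V" for k
    using square_diff_div_ge[of "r k - rs k" "e k" "w k" "rs k"] w_pos that
    by (simp add: c_def diff_divide_distrib)
  have "0 \<le> (\<Sum>k\<in>V. (r k - rs k) * c k)"
  proof (rule sum_mult_nonneg_if_upper_level_sums_nonneg[OF finite_users])
    show "sum (\<lambda>k. r k - rs k) V = 0" using rs r by (simp add: core_def sum_subtractf)
    fix \<theta>
    have "sum rs {k \<in> V. \<theta> < c k} \<le> sum r {k \<in> V. \<theta> < c k}"
    proof (rule sum_le_if_tight_separated)
      fix i j assume ij: "i \<in> {k \<in> V. \<theta> < c k}" "j \<in> V - {k \<in> V. \<theta> < c k}"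
        and "r i < rs i" "rs j < r j"
      then have "(2 * rs j + 1 / real K) / w j < (2 * rs i - 1 / real K) / w i" "i \<noteq> j"
        by (auto simp: c_def e_def \<delta>_def)
      then show "\<exists>A. tight rs A \<and> j \<in> A \<and> i \<notin> A"
        using rs \<open>0 < K\<close> ij locally_optimal[of j i]
        by (intro tight_separates_if_no_improving_exchange[where w = w]) auto
    qed (use rs r in auto)
    then show "0 \<le> sum (\<lambda>k. r k - rs k) {k \<in> V. \<theta> < c k}" by (simp add: sum_subtractf)
  qed
  also have "\<dots> \<le> (\<Sum>k\<in>V. (r k)\<^sup>2 / w k - (rs k)\<^sup>2 / w k)" using pointwise by (rule sum_mono)
  finally show ?thesis by (simp add: gfun_def sum_subtractf)
qed

end

theorem lemma2:
  fixes V :: "'u set" and Z :: "'u \<Rightarrow> 'p set" and w :: "'u \<Rightarrow> real"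
    and rs :: "'u \<Rightarrow> real" and K :: nat
  assumes "finite V" and "card V > 1"
    and "\<forall>i\<in>V. finite (Z i)"
    and "\<forall>i\<in>V. w i > 0"
    and "K = card (fund_partition V Z) - 1"
    and "rs \<in> core V Z \<inter> QK_vecs V K"
  shows "(\<forall>r\<in>core V Z \<inter> QK_vecs V K. gfun V w rs \<le> gfun V w r) \<longleftrightarrow>
         (\<forall>i\<in>V. \<forall>j\<in>V. \<forall>\<zeta>::nat. \<zeta> > 0 \<longrightarrow>
            (\<lambda>k. rs k + real \<zeta> / real K * (chi i k - chi j k)) \<in> core V Z \<longrightarrow>
            gfun V w rs \<le> gfun V w (\<lambda>k. rs k + real \<zeta> / real K * (chi i k - chi j k)))"
proof -
  interpret packet_sharing V Z using assms(1,3) by unfold_locales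
  show ?thesis (is "?global \<longleftrightarrow> ?local")
  proof
    assume ?global
    then show ?local using assms(6) QK_vecs_exchange[of rs V K] by blast
  next
    assume exchanges: ?local
    show ?global
    proof (cases "K = 0")
      case True
      \<comment> \<open>\<open>z / 0 = 0\<close> collapses the lattice to the origin\<close>
      then have "gfun V w r = 0" if "r \<in> QK_vecs V K" for r
        using that by (simp add: gfun_def QK_vecs_def)
      then show ?thesis using assms(6) by simp
    next
      case False
      then show ?thesis
        using locally_optimal_imp_optimal[OF assms(6) _ _ assms(4)] exchanges[rule_format, of _ _ 1]
        by simp
    qed
  qed
qed

end
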